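(* There is a universal constant $C\ge1$ such that for every $k\ge1$ and every perfect square $n$, \[\sum_{\lambda\vdash k}\frac{k!}{\lambda_1!\cdots\lambda_r!}\cdot\frac{(n)_{r}}{|\mathrm{Aut}(\lambda)|}\cdot\left|\mathbb E_{x\in\mathcal S(\sqrt n)}\big[x_1^{\lambda_1}\cdots x_r^{\lambda_r}\big]\right|\ \le\ k^{Ck}\,n^{k/2},\] where for each partition $\lambda=(\lambda_1\ge\cdots\ge\lambda_r>0)$ of $k$, $r=r(\lambda)$ is its number of parts. Moreover, for $n\ge6$ one may take $C=2$.
   Context: $\mathcal S(\sqrt n)=\{x\in\{\pm1\}^n:\sum_i x_i=\sqrt n\}$ with $x$ uniform on it. $(n)_r=n(n-1)\cdots(n-r+1)$ is the falling factorial. For a partition $\lambda$ of $k$, $|\mathrm{Aut}(\lambda)|=\prod_{i\ge1}p_i(\lambda)!$ where $p_i(\lambda)$ is the number of parts of $\lambda$ equal to $i$. *)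

theory Defs
  imports "HOL-Analysis.Analysis"
begin

definition partitions_of :: "nat \<Rightarrow> nat list set" where
  "partitions_of k = {lam. sorted_wrt (\<ge>) lam \<and> (\<forall>p\<in>set lam. 0 < p) \<and> sum_list lam = k}"

definition falling_fact :: "nat \<Rightarrow> nat \<Rightarrow> real" where
  "falling_fact n r = (\<Prod>i<r. real n - real i)"

definition aut_card :: "nat list \<Rightarrow> nat" where
  "aut_card lam = (\<Prod>i\<in>set lam. fact (count_list lam i))"

definition slice :: "nat \<Rightarrow> (nat \<Rightarrow> real) set" where
  "slice n = {x \<in> {0..<n} \<rightarrow>\<^sub>E {-1, 1}. (\<Sum>i<n. x i) = sqrt (real n)}"

text \<open>E_{x uniform on S(sqrt n)} [x_1^{lam_1} ... x_r^{lam_r}] (0-based coordinates).\<close>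
definition slice_moment :: "nat \<Rightarrow> nat list \<Rightarrow> real" where
  "slice_moment n lam =
     (\<Sum>x\<in>slice n. \<Prod>j<length lam. x j ^ (lam ! j)) / real (card (slice n))"

definition lhsB6 :: "nat \<Rightarrow> nat \<Rightarrow> real" where
  "lhsB6 k n = (\<Sum>lam\<in>partitions_of k.
      (fact k / (\<Prod>j<length lam. fact (lam ! j))) *
      (falling_fact n (length lam) / real (aut_card lam)) *
      \<bar>slice_moment n lam\<bar>)"

end

theory Submission
  imports Defs
begin

text \<open>
  By symmetry, a moment of the uniform slice depends only on the number \<open>s\<close> of odd exponents and
  equals \<open>E\<^sub>s = E[x\<^sub>1 \<cdots> x\<^sub>s]\<close>. Multiplying \<open>x\<^sub>1 \<cdots> x\<^sub>s\<close> by \<open>x\<^sub>1 + \<cdots> + x\<^sub>n = \<surd>n\<close> and using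
  \<open>x\<^sub>i\<^sup>2 = 1\<close> gives \<open>\<surd>n E\<^sub>s = s E\<^sub>s\<^sub>-\<^sub>1 + (n - s) E\<^sub>s\<^sub>+\<^sub>1\<close>, whence \<open>|E\<^sub>s| \<surd>n\<^sup>s \<le> s! 2\<^sup>s\<^sup>-\<^sup>1\<close> by
  induction. A partition of \<open>k\<close> with \<open>r\<close> parts, \<open>s\<close> of them odd, has \<open>2r - s \<le> k\<close>, so its term is
  at most \<open>k! n\<^sup>r |E\<^sub>s| \<le> k! (k! 2\<^sup>k\<^sup>-\<^sup>1) \<surd>n\<^sup>k\<close>. There are at most \<open>2\<^sup>k\<^sup>-\<^sup>1\<close> partitions of \<open>k\<close>
  (a composition is determined by its set of partial sums), and \<open>(k! 2\<^sup>k\<^sup>-\<^sup>1)\<^sup>2 \<le> k\<^sup>2\<^sup>k\<close>.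
  So \<open>C = 2\<close> works for every \<open>n\<close>.
\<close>

definition slice_prod_sum :: "nat \<Rightarrow> nat set \<Rightarrow> real" where
  "slice_prod_sum n A = (\<Sum>x\<in>slice n. \<Prod>i\<in>A. x i)"

lemma slice_coordinate: "x \<in> slice n \<Longrightarrow> i < n \<Longrightarrow> x i = -1 \<or> x i = 1"
  unfolding slice_def by (auto simp: PiE_def Pi_def)

lemma slice_coordinate_square: "x \<in> slice n \<Longrightarrow> i < n \<Longrightarrow> x i * x i = 1"
  using slice_coordinate by fastforce

lemma sum_slice: "x \<in> slice n \<Longrightarrow> (\<Sum>i<n. x i) = sqrt (real n)"
  unfolding slice_def by auto

lemma comp_permutes_in_slice:
  assumes h: "h permutes {0..<n}" and x: "x \<in> slice n"
  shows "x \<circ> h \<in> slice n"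
proof -
  have "(\<Sum>i<n. (x \<circ> h) i) = (\<Sum>i<n. x i)"
    using sum.permute[OF h, of x] by (simp add: atLeast0LessThan)
  then show ?thesis
    using x permutes_in_image[OF h] permutes_not_in[OF h]
    by (auto simp: slice_def PiE_def Pi_def extensional_def)
qed

lemma bij_betw_comp_permutes_slice:
  assumes h: "h permutes {0..<n}"
  shows "bij_betw (\<lambda>x. x \<circ> h) (slice n) (slice n)"
proof (rule bij_betw_byWitness[where f' = "\<lambda>x. x \<circ> inv h"])
  show "(\<lambda>x. x \<circ> h) ` slice n \<subseteq> slice n" "(\<lambda>x. x \<circ> inv h) ` slice n \<subseteq> slice n"
    using comp_permutes_in_slice h permutes_inv[OF h] by auto
qed (simp_all add: comp_assoc permutes_inv_o[OF h])

lemma slice_prod_sum_permutes_image: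
  assumes h: "h permutes {0..<n}"
  shows "slice_prod_sum n (h ` A) = slice_prod_sum n A"
proof -
  have "slice_prod_sum n (h ` A) = (\<Sum>x\<in>slice n. \<Prod>i\<in>A. (x \<circ> h) i)"
    unfolding slice_prod_sum_def
    by (simp add: prod.reindex[OF inj_on_subset[OF permutes_inj[OF h] subset_UNIV]])
  also have "\<dots> = slice_prod_sum n A"
    unfolding slice_prod_sum_def
    using sum.reindex_bij_betw[OF bij_betw_comp_permutes_slice[OF h], of "\<lambda>x. \<Prod>i\<in>A. x i"] .
  finally show ?thesis .
qed

lemma exists_permutes_image_eq:
  assumes "finite S" "A \<subseteq> S" "B \<subseteq> S" "card A = card B"
  obtains h where "h permutes S" "h ` A = B"
proof -
  have fin: "finite A" "finite B" using assms finite_subset by auto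
  obtain f where f: "bij_betw f A B"
    using bij_betw_iff_card[OF fin] assms(4) by auto
  have "card (S - A) = card (S - B)"
    using assms fin by (simp add: card_Diff_subset)
  then obtain g where g: "bij_betw g (S - A) (S - B)"
    using bij_betw_iff_card[of "S - A" "S - B"] assms(1) by auto
  define h where "h i = (if i \<in> A then f i else if i \<in> S then g i else i)" for i
  have "bij_betw h (A \<union> (S - A)) (B \<union> (S - B))"
  proof (rule bij_betw_combine)
    show "bij_betw h A B" using f by (rule bij_betw_cong[THEN iffD1, rotated]) (simp add: h_def)
    show "bij_betw h (S - A) (S - B)"
      using g by (rule bij_betw_cong[THEN iffD1, rotated]) (simp add: h_def)
  qed blast
  then have "bij_betw h S S" using assms(2,3) by (simp add: Un_absorb1)
  then have "h permutes S" by (rule bij_imp_permutes) (use assms(2) in \<open>auto simp: h_def\<close>)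
  moreover have "h ` A = B" using f by (auto simp: h_def bij_betw_def)
  ultimately show ?thesis using that by blast
qed

lemma slice_prod_sum_card_eq:
  assumes "A \<subseteq> {0..<n}" "B \<subseteq> {0..<n}" "card A = card B"
  shows "slice_prod_sum n A = slice_prod_sum n B"
proof -
  obtain h where "h permutes {0..<n}" "h ` A = B"
    using exists_permutes_image_eq[OF finite_atLeastLessThan assms] .
  then show ?thesis using slice_prod_sum_permutes_image by metis
qed

lemma prod_mult_sign_coordinate:
  fixes x :: "'a \<Rightarrow> real"
  assumes "finite A" "x i * x i = 1"
  shows "(\<Prod>j\<in>A. x j) * x i = (if i \<in> A then \<Prod>j\<in>A - {i}. x j else \<Prod>j\<in>insert i A. x j)"
  using assms by (auto simp: prod.remove mult.commute mult.left_commute)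

lemma sum_slice_prod_mult_coordinate:
  assumes i: "i < n" and s: "s < n"
  shows "(\<Sum>x\<in>slice n. (\<Prod>j\<in>{0..<s}. x j) * x i)
           = (if i < s then slice_prod_sum n {0..<s - 1} else slice_prod_sum n {0..<Suc s})"
proof (cases "i < s")
  case True
  have "(\<Sum>x\<in>slice n. (\<Prod>j\<in>{0..<s}. x j) * x i) = slice_prod_sum n ({0..<s} - {i})"
    unfolding slice_prod_sum_def using True
    by (intro sum.cong refl) (simp add: prod_mult_sign_coordinate slice_coordinate_square i)
  also have "\<dots> = slice_prod_sum n {0..<s - 1}"
    using True s by (intro slice_prod_sum_card_eq) auto
  finally show ?thesis using True by simp
next
  case False
  have "(\<Sum>x\<in>slice n. (\<Prod>j\<in>{0..<s}. x j) * x i) = slice_prod_sum n (insert i {0..<s})"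
    unfolding slice_prod_sum_def using False
    by (intro sum.cong refl) (simp add: prod_mult_sign_coordinate slice_coordinate_square i)
  also have "\<dots> = slice_prod_sum n {0..<Suc s}"
    using False i s by (intro slice_prod_sum_card_eq) auto
  finally show ?thesis using False by simp
qed

lemma slice_prod_sum_recurrence:
  assumes s: "s < n"
  shows "sqrt (real n) * slice_prod_sum n {0..<s}
           = real s * slice_prod_sum n {0..<s - 1} + real (n - s) * slice_prod_sum n {0..<Suc s}"
proof -
  let ?P = "slice_prod_sum n"
  have "sqrt (real n) * ?P {0..<s} = (\<Sum>x\<in>slice n. (\<Prod>j\<in>{0..<s}. x j) * (\<Sum>i<n. x i))"
    by (simp add: slice_prod_sum_def sum_distrib_left sum_slice mult.commute)
  also have "\<dots> = (\<Sum>i<n. \<Sum>x\<in>slice n. (\<Prod>j\<in>{0..<s}. x j) * x i)"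
    by (simp add: sum_distrib_left sum.swap[of _ "slice n"])
  also have "\<dots> = (\<Sum>i<n. if i < s then ?P {0..<s - 1} else ?P {0..<Suc s})"
    using s by (simp add: sum_slice_prod_mult_coordinate)
  also have "\<dots> = real s * ?P {0..<s - 1} + real (n - s) * ?P {0..<Suc s}"
  proof -
    let ?F = "\<lambda>i. if i < s then ?P {0..<s - 1} else ?P {0..<Suc s}"
    have "sum ?F {..<n} = sum ?F {..<s} + sum ?F {s..<n}"
      unfolding lessThan_atLeast0 by (rule sum.atLeastLessThan_concat[symmetric]) (use s in auto)
    then show ?thesis by simp
  qed
  finally show ?thesis .
qed

text \<open>Truncated subtraction makes \<open>fact_pow2 0 = 1\<close>, matching \<open>E\<^sub>0 = 1\<close>.\<close>

definition fact_pow2 :: "nat \<Rightarrow> real" where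
  "fact_pow2 s = fact s * 2 ^ (s - 1)"

lemma fact_pow2_nonneg: "0 \<le> fact_pow2 s"
  by (simp add: fact_pow2_def)

lemma fact_pow2_mono: "s \<le> k \<Longrightarrow> fact_pow2 s \<le> fact_pow2 k"
  unfolding fact_pow2_def by (intro mult_mono) (auto intro: fact_mono power_increasing)

lemma fact_pow2_step: "real (t + 2) * (fact_pow2 (t + 1) + real (t + 1) * fact_pow2 t) \<le> fact_pow2 (t + 2)"
proof -
  have "fact_pow2 (t + 1) + real (t + 1) * fact_pow2 t = fact (t + 1) * (2 ^ t + 2 ^ (t - 1))"
    by (simp add: fact_pow2_def algebra_simps)
  also have "\<dots> \<le> fact (t + 1) * 2 ^ (t + 1)"
    using power_increasing[of "t - 1" t "2::real"] by (intro mult_left_mono) auto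
  finally have "real (t + 2) * (fact_pow2 (t + 1) + real (t + 1) * fact_pow2 t)
      \<le> real (t + 2) * fact (t + 1) * 2 ^ (t + 1)"
    by (simp add: mult.assoc mult_left_mono)
  also have "\<dots> = fact_pow2 (t + 2)"
    using fact_Suc[of "t + 1"] by (simp add: fact_pow2_def)
  finally show ?thesis .
qed

lemma fact_pow2_le_power_self: "fact_pow2 k \<le> real k ^ k"
proof (induction k)
  case 0
  then show ?case by (simp add: fact_pow2_def)
next
  case (Suc k)
  show ?case
  proof (cases "k = 0")
    case True
    then show ?thesis by (simp add: fact_pow2_def)
  next
    case False
    then have kpos: "0 < real k" by simp
    have "-1 \<le> 1 / real k" using kpos by (simp add: order.trans[of _ 0])
    then have "2 \<le> (1 + 1 / real k) ^ k"
      using Bernoulli_inequality[of "1 / real k" k] kpos by simp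
    then have "2 * real k ^ k \<le> (1 + 1 / real k) ^ k * real k ^ k"
      by (intro mult_right_mono) auto
    also have "\<dots> = (real k + 1) ^ k"
      using kpos by (simp add: power_mult_distrib[symmetric] field_simps)
    finally have bern: "2 * real k ^ k \<le> (real k + 1) ^ k" .
    have "fact_pow2 (Suc k) = (real k + 1) * (2 * fact_pow2 k)"
      using False by (simp add: fact_pow2_def power_Suc[symmetric] algebra_simps del: power_Suc)
    also have "\<dots> \<le> (real k + 1) * (real k + 1) ^ k"
      using Suc.IH bern by (intro mult_left_mono) auto
    finally show ?thesis by (simp add: add.commute)
  qed
qed

lemma three_term_recurrence_bound_step:
  fixes q c E0 E1 E2 :: real
  assumes rec: "q * E1 = real (t + 1) * E0 + (q\<^sup>2 - real (t + 1)) * E2"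
    and q: "real t + 2 \<le> q\<^sup>2" "0 \<le> q" and c: "0 \<le> c"
    and E0: "\<bar>E0\<bar> * q ^ t \<le> fact_pow2 t * c"
    and E1: "\<bar>E1\<bar> * q ^ (t + 1) \<le> fact_pow2 (t + 1) * c"
  shows "\<bar>E2\<bar> * q ^ (t + 2) \<le> fact_pow2 (t + 2) * c"
proof -
  define N where "N = q\<^sup>2 - real (t + 1)"
  have N: "0 < N" using q by (simp add: N_def)
  have "N * (\<bar>E2\<bar> * q ^ (t + 2)) = \<bar>q * E1 - real (t + 1) * E0\<bar> * q ^ (t + 2)"
    using rec N by (simp add: N_def abs_mult)
  also have "\<dots> \<le> (q * \<bar>E1\<bar> + real (t + 1) * \<bar>E0\<bar>) * q ^ (t + 2)"
    using q abs_triangle_ineq4[of "q * E1" "real (t + 1) * E0"]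
    by (intro mult_right_mono) (auto simp: abs_mult)
  also have "\<dots> = q\<^sup>2 * (\<bar>E1\<bar> * q ^ (t + 1) + real (t + 1) * (\<bar>E0\<bar> * q ^ t))"
    by (simp add: power2_eq_square algebra_simps)
  also have "\<dots> \<le> q\<^sup>2 * (fact_pow2 (t + 1) * c + real (t + 1) * (fact_pow2 t * c))"
    using E0 E1 by (intro mult_left_mono add_mono) auto
  also have "\<dots> = q\<^sup>2 * ((fact_pow2 (t + 1) + real (t + 1) * fact_pow2 t) * c)"
    by (simp add: algebra_simps)
  also have "\<dots> \<le> (real (t + 2) * N) * ((fact_pow2 (t + 1) + real (t + 1) * fact_pow2 t) * c)"
  proof (rule mult_right_mono)
    have "(real t + 1) * (real t + 2) \<le> (real t + 1) * q\<^sup>2"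
      using q by (intro mult_left_mono) auto
    then show "q\<^sup>2 \<le> real (t + 2) * N" by (simp add: N_def algebra_simps)
  qed (use c in \<open>simp add: fact_pow2_nonneg\<close>)
  also have "\<dots> \<le> N * (fact_pow2 (t + 2) * c)"
    using mult_right_mono[OF fact_pow2_step c] N by (simp add: mult.assoc mult.left_commute)
  finally show ?thesis using N by simp
qed

lemma abs_slice_prod_sum_le:
  assumes "s \<le> n"
  shows "\<bar>slice_prod_sum n {0..<s}\<bar> * sqrt (real n) ^ s \<le> fact_pow2 s * real (card (slice n))"
proof -
  let ?c = "real (card (slice n))"
  let ?B = "\<lambda>s. \<bar>slice_prod_sum n {0..<s}\<bar> * sqrt (real n) ^ s \<le> fact_pow2 s * ?c"
  have empty: "slice_prod_sum n {} = ?c" by (simp add: slice_prod_sum_def)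
  have "?B s \<and> ?B (Suc s)" if "Suc s \<le> n" for s
    using that
  proof (induction s)
    case 0
    then have q: "0 < sqrt (real n)" by simp
    have "sqrt (real n) * ?c = sqrt (real n) * (sqrt (real n) * slice_prod_sum n {0..<1})"
      using slice_prod_sum_recurrence[of 0 n] 0 empty by (simp add: mult.assoc[symmetric])
    then have "?c = sqrt (real n) * slice_prod_sum n {0..<1}" using q by simp
    moreover have "0 \<le> ?c" by simp
    ultimately show ?case using q by (simp add: empty fact_pow2_def abs_mult zero_le_mult_iff)
  next
    case (Suc t)
    have rec: "sqrt (real n) * slice_prod_sum n {0..<t + 1}
        = real (t + 1) * slice_prod_sum n {0..<t}
          + ((sqrt (real n))\<^sup>2 - real (t + 1)) * slice_prod_sum n {0..<t + 2}"
      using slice_prod_sum_recurrence[of "t + 1" n] Suc.prems by (simp add: of_nat_diff)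
    have "?B (t + 2)"
      using three_term_recurrence_bound_step[OF rec] Suc by simp
    then show ?case using Suc by simp
  qed
  then show ?thesis using assms by (cases s) (auto simp: empty fact_pow2_def)
qed

definition odd_positions :: "nat list \<Rightarrow> nat set" where
  "odd_positions lam = {j. j < length lam \<and> odd (lam ! j)}"

lemma card_odd_positions_le: "card (odd_positions lam) \<le> length lam"
  using card_mono[of "{..<length lam}" "odd_positions lam"] by (auto simp: odd_positions_def)

lemma power_of_sign: "x = -1 \<or> x = (1::'a::ring_1) \<Longrightarrow> x ^ p = (if odd p then x else 1)"
  by auto

lemma slice_moment_eq_slice_prod_sum:
  assumes r: "length lam \<le> n"
  shows "slice_moment n lam
           = slice_prod_sum n {0..<card (odd_positions lam)} / real (card (slice n))"
proof -
  have pos: "odd_positions lam \<subseteq> {0..<n}" using r by (auto simp: odd_positions_def)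
  have "(\<Sum>x\<in>slice n. \<Prod>j<length lam. x j ^ (lam ! j)) = slice_prod_sum n (odd_positions lam)"
    unfolding slice_prod_sum_def
  proof (intro sum.cong refl)
    fix x assume x: "x \<in> slice n"
    have "(\<Prod>j<length lam. x j ^ (lam ! j)) = (\<Prod>j<length lam. if odd (lam ! j) then x j else 1)"
      using slice_coordinate[OF x] r by (intro prod.cong refl power_of_sign) auto
    also have "\<dots> = (\<Prod>j\<in>odd_positions lam. x j)"
      unfolding odd_positions_def by (simp add: prod.inter_filter[symmetric] lessThan_def)
    finally show "(\<Prod>j<length lam. x j ^ (lam ! j)) = (\<Prod>j\<in>odd_positions lam. x j)" .
  qed
  also have "\<dots> = slice_prod_sum n {0..<card (odd_positions lam)}"
    using pos card_mono[OF _ pos] by (intro slice_prod_sum_card_eq) auto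
  finally show ?thesis unfolding slice_moment_def by simp
qed

lemma abs_slice_moment_le:
  assumes "length lam \<le> n"
  shows "\<bar>slice_moment n lam\<bar> * sqrt (real n) ^ card (odd_positions lam)
           \<le> fact_pow2 (card (odd_positions lam))"
proof -
  let ?s = "card (odd_positions lam)" and ?c = "real (card (slice n))"
  have "\<bar>slice_moment n lam\<bar> * sqrt (real n) ^ ?s
      = \<bar>slice_prod_sum n {0..<?s}\<bar> * sqrt (real n) ^ ?s / ?c"
    using slice_moment_eq_slice_prod_sum[OF assms] by (simp add: abs_divide)
  also have "\<dots> \<le> fact_pow2 ?s * ?c / ?c"
    using abs_slice_prod_sum_le[of ?s n] card_odd_positions_le[of lam] assms
    by (intro divide_right_mono) auto
  also have "\<dots> \<le> fact_pow2 ?s"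
    by (cases "?c = 0") (simp_all add: fact_pow2_nonneg)
  finally show ?thesis .
qed

lemma two_length_le_sum_list_add_card_odd_positions:
  assumes "\<forall>p\<in>set lam. 0 < p"
  shows "2 * length lam \<le> sum_list lam + card (odd_positions lam)"
proof -
  have parity: "2 \<le> p + (if odd p then 1 else 0)" if "0 < p" for p :: nat
    using that by presburger
  have "2 * length lam = (\<Sum>j<length lam. 2)" by simp
  also have "\<dots> \<le> (\<Sum>j<length lam. lam ! j + (if odd (lam ! j) then 1 else 0))"
    using assms by (intro sum_mono parity) (simp add: nth_mem)
  also have "\<dots> = sum_list lam + card (odd_positions lam)"
    by (simp add: sum.distrib sum_list_sum_nth atLeast0LessThan sum.If_cases odd_positions_def
        lessThan_def Collect_conj_eq)
  finally show ?thesis .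
qed

lemma falling_fact_eq_0: "n < r \<Longrightarrow> falling_fact n r = 0"
  unfolding falling_fact_def by (subst prod_zero_iff) auto

lemma falling_fact_nonneg: "0 \<le> falling_fact n r"
proof (cases "r \<le> n")
  case True
  then show ?thesis unfolding falling_fact_def by (intro prod_nonneg) auto
next
  case False
  then show ?thesis by (simp add: falling_fact_eq_0)
qed

lemma falling_fact_le_power: "falling_fact n r \<le> real n ^ r"
proof (cases "r \<le> n")
  case True
  then show ?thesis
    unfolding falling_fact_def using prod_mono[of "{..<r}" "\<lambda>i. real n - real i" "\<lambda>_. real n"]
    by simp
next
  case False
  then show ?thesis by (simp add: falling_fact_eq_0)
qed

fun partial_sums :: "nat list \<Rightarrow> nat set" where
  "partial_sums [] = {}"
| "partial_sums (x # xs) = insert x ((+) x ` partial_sums xs)"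

lemma partial_sums_subset: "\<forall>p\<in>set xs. 0 < p \<Longrightarrow> partial_sums xs \<subseteq> {1..sum_list xs}"
  by (induction xs) auto

lemma sum_list_in_partial_sums: "xs \<noteq> [] \<Longrightarrow> sum_list xs \<in> partial_sums xs"
proof (induction xs)
  case (Cons x xs)
  then show ?case by (cases "xs = []") auto
qed simp

lemma partial_sums_Cons_ge: "p \<in> partial_sums (x # xs) \<Longrightarrow> x \<le> p"
  by auto

lemma partial_sums_inject:
  "\<forall>p\<in>set xs. 0 < p \<Longrightarrow> \<forall>p\<in>set ys. 0 < p \<Longrightarrow> partial_sums xs = partial_sums ys \<Longrightarrow> xs = ys"
proof (induction xs arbitrary: ys)
  case Nil
  then show ?case by (cases ys) auto
next
  case (Cons x xs)
  obtain y ys' where ys: "ys = y # ys'" using Cons.prems by (cases ys) auto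
  have pos: "0 \<notin> partial_sums xs" "0 \<notin> partial_sums ys'"
    using partial_sums_subset[of xs] partial_sums_subset[of ys'] Cons.prems ys by auto
  have eq: "insert x ((+) x ` partial_sums xs) = insert y ((+) y ` partial_sums ys')"
    using Cons.prems ys by simp
  have "x \<in> partial_sums (y # ys')" "y \<in> partial_sums (x # xs)"
    using eq by auto
  then have "y \<le> x" "x \<le> y" by (auto intro: partial_sums_Cons_ge simp del: partial_sums.simps)
  then have "x = y" by simp
  moreover have "x \<notin> (+) x ` partial_sums xs" "y \<notin> (+) y ` partial_sums ys'"
    using pos by auto
  ultimately have "(+) x ` partial_sums xs = (+) x ` partial_sums ys'"
    using eq by (metis insert_ident)
  then have "partial_sums xs = partial_sums ys'" by (simp add: inj_image_eq_iff)
  then have "xs = ys'" using Cons.prems ys by (intro Cons.IH) auto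
  then show ?case using ys \<open>x = y\<close> by simp
qed

lemma card_partitions_of_le:
  assumes k: "1 \<le> k"
  shows "card (partitions_of k) \<le> 2 ^ (k - 1)"
proof -
  let ?f = "\<lambda>lam. partial_sums lam - {k}"
  have "card (partitions_of k) \<le> card (Pow {1..<k})"
  proof (rule card_inj_on_le)
    show "inj_on ?f (partitions_of k)"
    proof (rule inj_onI)
      fix a b assume a: "a \<in> partitions_of k" and b: "b \<in> partitions_of k" and eq: "?f a = ?f b"
      have "sum_list a = k" "sum_list b = k" using a b by (simp_all add: partitions_of_def)
      moreover have "a \<noteq> []" "b \<noteq> []" using calculation k by (metis sum_list.Nil not_one_le_zero)+
      ultimately have "k \<in> partial_sums a" "k \<in> partial_sums b"
        using sum_list_in_partial_sums by metis+
      then have "partial_sums a = partial_sums b" using eq by (metis insert_Diff)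
      then show "a = b" using partial_sums_inject a b by (auto simp: partitions_of_def)
    qed
    show "?f ` partitions_of k \<subseteq> Pow {1..<k}"
      using partial_sums_subset by (fastforce simp: partitions_of_def)
  qed simp
  then show ?thesis by (simp add: card_Pow)
qed

lemma partition_coefficient_bounds:
  fixes k n :: nat and lam :: "nat list"
  defines "a \<equiv> fact k / (\<Prod>j<length lam. fact (lam ! j)) * (falling_fact n (length lam) / real (aut_card lam))"
  shows "0 \<le> a" "a \<le> fact k * real n ^ length lam"
proof -
  let ?r = "length lam"
  have facts: "1 \<le> (\<Prod>j<?r. fact (lam ! j) :: real)" by (intro prod_ge_1) (simp add: fact_ge_1)
  have multinomial: "0 \<le> fact k / (\<Prod>j<?r. fact (lam ! j) :: real)"
      "fact k / (\<Prod>j<?r. fact (lam ! j)) \<le> (fact k :: real)"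
    using facts by (simp_all add: divide_le_eq)
  have "1 \<le> aut_card lam" unfolding aut_card_def by (intro prod_ge_1) (simp add: fact_ge_1)
  then have "falling_fact n ?r / real (aut_card lam) \<le> falling_fact n ?r"
    using falling_fact_nonneg[of n ?r] by (simp add: divide_le_eq mult_le_cancel_left1)
  then have falling: "0 \<le> falling_fact n ?r / real (aut_card lam)"
      "falling_fact n ?r / real (aut_card lam) \<le> real n ^ ?r"
    using falling_fact_nonneg[of n ?r] falling_fact_le_power[of n ?r] by auto
  show "0 \<le> a" unfolding a_def using multinomial(1) falling(1) by (rule mult_nonneg_nonneg)
  show "a \<le> fact k * real n ^ ?r" unfolding a_def
    by (rule mult_mono) (use multinomial falling in auto)
qed

lemma power_mult_abs_slice_moment_le:
  assumes lam: "lam \<in> partitions_of k" and r: "length lam \<le> n"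
  shows "real n ^ length lam * \<bar>slice_moment n lam\<bar> \<le> fact_pow2 k * sqrt (real n) ^ k"
proof -
  let ?r = "length lam" and ?s = "card (odd_positions lam)" and ?q = "sqrt (real n)"
  have k: "sum_list lam = k" and two: "2 * ?r \<le> k + ?s"
    using lam two_length_le_sum_list_add_card_odd_positions[of lam] by (auto simp: partitions_of_def)
  have "real n ^ ?r = ?q ^ (2 * ?r)" by (simp add: power_mult)
  also have "\<dots> = ?q ^ (2 * ?r - ?s) * ?q ^ ?s"
    using card_odd_positions_le[of lam] by (simp add: power_add[symmetric])
  finally have "real n ^ ?r * \<bar>slice_moment n lam\<bar> = ?q ^ (2 * ?r - ?s) * (\<bar>slice_moment n lam\<bar> * ?q ^ ?s)"
    by simp
  also have "\<dots> \<le> ?q ^ k * fact_pow2 k"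
  proof (rule mult_mono)
    show "?q ^ (2 * ?r - ?s) \<le> ?q ^ k"
    proof (cases "n = 0")
      case True
      then show ?thesis using r k by simp
    next
      case False
      then show ?thesis using two by (intro power_increasing) auto
    qed
    show "\<bar>slice_moment n lam\<bar> * ?q ^ ?s \<le> fact_pow2 k"
      using abs_slice_moment_le[OF r] fact_pow2_mono[of ?s k] two card_odd_positions_le[of lam]
      by linarith
  qed (simp_all add: fact_pow2_nonneg)
  finally show ?thesis by (simp add: mult.commute)
qed

lemma partition_term_le:
  assumes lam: "lam \<in> partitions_of k"
  shows "fact k / (\<Prod>j<length lam. fact (lam ! j)) * (falling_fact n (length lam) / real (aut_card lam))
           * \<bar>slice_moment n lam\<bar> \<le> fact k * fact_pow2 k * sqrt (real n) ^ k"
    (is "?a * \<bar>slice_moment n lam\<bar> \<le> _")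
proof (cases "length lam \<le> n")
  case True
  have "?a * \<bar>slice_moment n lam\<bar> \<le> fact k * real n ^ length lam * \<bar>slice_moment n lam\<bar>"
    using partition_coefficient_bounds(2)[where k = k and n = n and lam = lam] by (rule mult_right_mono) simp
  also have "\<dots> \<le> fact k * (fact_pow2 k * sqrt (real n) ^ k)"
    using power_mult_abs_slice_moment_le[OF lam True] by (simp add: mult.assoc mult_left_mono)
  finally show ?thesis by (simp add: mult.assoc)
next
  case False
  then show ?thesis by (simp add: falling_fact_eq_0 fact_pow2_nonneg)
qed

lemma real_powr_half_eq_sqrt_power: "0 < k \<Longrightarrow> real n powr (real k / 2) = sqrt (real n) ^ k"
  by (simp add: powr_half_sqrt_powr powr_realpow' real_sqrt_power)

lemma lhsB6_le:
  assumes k: "1 \<le> k"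
  shows "lhsB6 k n \<le> real k powr (2 * real k) * real n powr (real k / 2)"
proof -
  let ?T = "fact k * fact_pow2 k * sqrt (real n) ^ k"
  have "lhsB6 k n \<le> real (card (partitions_of k)) * ?T"
    unfolding lhsB6_def by (rule sum_bounded_above) (rule partition_term_le)
  also have "\<dots> \<le> 2 ^ (k - 1) * ?T"
    using card_partitions_of_le[OF k]
    by (intro mult_right_mono) (simp_all add: fact_pow2_nonneg flip: of_nat_le_iff)
  also have "\<dots> = fact_pow2 k ^ 2 * sqrt (real n) ^ k"
    by (simp add: fact_pow2_def power2_eq_square)
  also have "\<dots> \<le> (real k ^ k) ^ 2 * sqrt (real n) ^ k"
    by (intro mult_right_mono power_mono fact_pow2_le_power_self) (simp_all add: fact_pow2_nonneg)
  also have "\<dots> = real k powr (2 * real k) * real n powr (real k / 2)"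
    using k powr_realpow'[of "real k" "2 * k"]
    by (simp add: real_powr_half_eq_sqrt_power mult.commute flip: power_mult)
  finally show ?thesis .
qed

theorem lemmaB6:
  shows "(\<exists>C::real. C \<ge> 1 \<and>
            (\<forall>k n::nat. k \<ge> 1 \<longrightarrow> (\<exists>m::nat. n = m ^ 2) \<longrightarrow>
               lhsB6 k n \<le> real k powr (C * real k) * real n powr (real k / 2)))
       \<and> (\<forall>k n::nat. k \<ge> 1 \<longrightarrow> (\<exists>m::nat. n = m ^ 2) \<longrightarrow> n \<ge> 6 \<longrightarrow>
               lhsB6 k n \<le> real k powr (2 * real k) * real n powr (real k / 2))"
  by (auto intro!: exI[of _ 2] lhsB6_le)

end
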